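(* Let $s_0<s_1<\dots<s_k<\dots$ satisfy $\lim_{k\to\infty}s_k=\infty$ and $s_{k+1}-s_k\le h$ for all $k\ge0$, where $h>0$. For each $k\ge0$ let there be finitely many points $s_k=t^{(k)}_0<t^{(k)}_1<\dots<t^{(k)}_{n_k}=s_{k+1}$. Let $W:[s_0,\infty)\to[0,\infty)$ be absolutely continuous on each interval $[t^{(k)}_j,t^{(k)}_{j+1})$, $0\le j\le n_k-1$, with left limits satisfying $$\lim_{t\uparrow t^{(k)}_j}W(t)\ge W(t^{(k)}_j)\quad\text{for all }k\ge0,\ 1\le j\le n_k.$$ Let $\delta_0>\delta_1>0$ and assume that for all $k\ge0$ and $0\le j\le n_k-1$, $$\dot W(t)\le-2\delta_0W(t)+2\delta_1\sup_{s_k\le\theta\le t}W(\theta)\quad\text{for almost all }t\in[t^{(k)}_j,t^{(k)}_{j+1}).$$ Then $W(t)\le e^{-2\delta_\tau(t-s_0)}W(s_0)$ for all $t\ge s_0$, where $\delta_\tau>0$ is the unique positive solution of $\delta_\tau=\delta_0-\delta_1e^{2\delta_\tau h}$. *)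

theory Defs
  imports "HOL-Analysis.Analysis"
begin

definition abs_cont_on :: "(real \<Rightarrow> real) \<Rightarrow> real set \<Rightarrow> bool" where
  "abs_cont_on f I \<longleftrightarrow>
     (\<forall>\<epsilon>>0. \<exists>\<delta>>0. \<forall>(m::nat) (a::nat \<Rightarrow> real) (b::nat \<Rightarrow> real).
        (\<forall>i<m. a i < b i \<and> {a i..b i} \<subseteq> I) \<longrightarrow>
        (\<forall>i<m. \<forall>j<m. i \<noteq> j \<longrightarrow> b i \<le> a j \<or> b j \<le> a i) \<longrightarrow>
        (\<Sum>i<m. b i - a i) < \<delta> \<longrightarrow>
        (\<Sum>i<m. \<bar>f (b i) - f (a i)\<bar>) < \<epsilon>)"

definition delta_tau :: "real \<Rightarrow> real \<Rightarrow> real \<Rightarrow> real" where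
  "delta_tau \<delta>0 \<delta>1 h = (THE x. x > 0 \<and> x = \<delta>0 - \<delta>1 * exp (2 * x * h))"

end

theory Submission
  imports Defs
begin

text \<open>
  Write \<open>\<kappa> = 2 \<delta>\<^sub>\<tau>\<close>. On a segment from \<open>c = s\<^sub>k\<close> to \<open>s\<^sub>k\<^sub>+\<^sub>1\<close> compare \<open>W\<close> with the
  envelope \<open>z(y) = (W(c) + \<epsilon>) exp(-\<kappa> (y - c)) + \<epsilon>\<close>. Since \<open>y - c \<le> h\<close>, the equation
  \<open>\<kappa> = 2\<delta>\<^sub>0 - 2\<delta>\<^sub>1 exp(\<kappa> h)\<close> makes \<open>z\<close> a strict supersolution: if \<open>W \<le> z\<close> up to a point
  \<open>p\<close>, then just after \<open>p\<close> (where \<open>W\<close> is uniformly close to \<open>W(p)\<close>) the supremum term is small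
  enough that \<open>W - z\<close> has negative derivative wherever it is positive. The derivative is only
  known almost everywhere, but an absolutely continuous function maps null sets to null sets, and
  that suffices to keep \<open>W - z \<le> 0\<close>. The left-limit condition carries the bound across the
  break points; letting \<open>\<epsilon> \<rightarrow> 0\<close> bounds \<open>W\<close> on the segment by \<open>W(c) exp(-\<kappa> (y - c))\<close>, and
  the segment bounds multiply up.
\<close>

section \<open>Absolute continuity\<close>

lemma abs_cont_onI:
  assumes "\<And>\<epsilon>. \<epsilon> > 0 \<Longrightarrow> \<delta> \<epsilon> > 0"
    and "\<And>\<epsilon> (m::nat) (a::nat \<Rightarrow> real) (b::nat \<Rightarrow> real). \<epsilon> > 0 \<Longrightarrow>
      \<forall>i<m. a i < b i \<and> {a i..b i} \<subseteq> I \<Longrightarrow>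
      \<forall>i<m. \<forall>j<m. i \<noteq> j \<longrightarrow> b i \<le> a j \<or> b j \<le> a i \<Longrightarrow>
      (\<Sum>i<m. b i - a i) < \<delta> \<epsilon> \<Longrightarrow> (\<Sum>i<m. \<bar>f (b i) - f (a i)\<bar>) < \<epsilon>"
  shows "abs_cont_on f I"
  unfolding abs_cont_on_def
proof (intro allI impI)
  fix \<epsilon> :: real assume "\<epsilon> > 0"
  then show "\<exists>\<delta>>0. \<forall>(m::nat) (a::nat \<Rightarrow> real) (b::nat \<Rightarrow> real).
      (\<forall>i<m. a i < b i \<and> {a i..b i} \<subseteq> I) \<longrightarrow>
      (\<forall>i<m. \<forall>j<m. i \<noteq> j \<longrightarrow> b i \<le> a j \<or> b j \<le> a i) \<longrightarrow>
      (\<Sum>i<m. b i - a i) < \<delta> \<longrightarrow> (\<Sum>i<m. \<bar>f (b i) - f (a i)\<bar>) < \<epsilon>"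
    using assms by (intro exI[of _ "\<delta> \<epsilon>"] conjI) blast+
qed

lemma abs_cont_onE:
  assumes "abs_cont_on f I"
  obtains \<delta> where "\<And>\<epsilon>. \<epsilon> > 0 \<Longrightarrow> \<delta> \<epsilon> > 0"
    and "\<And>\<epsilon> (m::nat) (a::nat \<Rightarrow> real) (b::nat \<Rightarrow> real). \<epsilon> > 0 \<Longrightarrow>
      \<forall>i<m. a i < b i \<and> {a i..b i} \<subseteq> I \<Longrightarrow>
      \<forall>i<m. \<forall>j<m. i \<noteq> j \<longrightarrow> b i \<le> a j \<or> b j \<le> a i \<Longrightarrow>
      (\<Sum>i<m. b i - a i) < \<delta> \<epsilon> \<Longrightarrow> (\<Sum>i<m. \<bar>f (b i) - f (a i)\<bar>) < \<epsilon>"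
proof -
  from assms have "\<exists>\<delta>. \<forall>\<epsilon>>0. \<delta> \<epsilon> > 0 \<and> (\<forall>(m::nat) (a::nat \<Rightarrow> real) (b::nat \<Rightarrow> real).
      (\<forall>i<m. a i < b i \<and> {a i..b i} \<subseteq> I) \<longrightarrow>
      (\<forall>i<m. \<forall>j<m. i \<noteq> j \<longrightarrow> b i \<le> a j \<or> b j \<le> a i) \<longrightarrow>
      (\<Sum>i<m. b i - a i) < \<delta> \<epsilon> \<longrightarrow> (\<Sum>i<m. \<bar>f (b i) - f (a i)\<bar>) < \<epsilon>)"
    unfolding abs_cont_on_def by (rule choice_iff'[THEN iffD1])
  then obtain \<delta> where \<delta>: "\<forall>\<epsilon>>0. \<delta> \<epsilon> > 0 \<and> (\<forall>(m::nat) (a::nat \<Rightarrow> real) (b::nat \<Rightarrow> real).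
      (\<forall>i<m. a i < b i \<and> {a i..b i} \<subseteq> I) \<longrightarrow>
      (\<forall>i<m. \<forall>j<m. i \<noteq> j \<longrightarrow> b i \<le> a j \<or> b j \<le> a i) \<longrightarrow>
      (\<Sum>i<m. b i - a i) < \<delta> \<epsilon> \<longrightarrow> (\<Sum>i<m. \<bar>f (b i) - f (a i)\<bar>) < \<epsilon>)" ..
  show ?thesis
    by (rule that[of \<delta>]) (use \<delta> in blast)+
qed

lemma abs_cont_on_subset:
  assumes "abs_cont_on f J" "I \<subseteq> J"
  shows "abs_cont_on f I"
proof -
  obtain \<delta> where "\<And>\<epsilon>. \<epsilon> > 0 \<Longrightarrow> \<delta> \<epsilon> > 0"
    and \<delta>: "\<And>\<epsilon> (m::nat) (a::nat \<Rightarrow> real) (b::nat \<Rightarrow> real). \<epsilon> > 0 \<Longrightarrow>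
      \<forall>i<m. a i < b i \<and> {a i..b i} \<subseteq> J \<Longrightarrow>
      \<forall>i<m. \<forall>j<m. i \<noteq> j \<longrightarrow> b i \<le> a j \<or> b j \<le> a i \<Longrightarrow>
      (\<Sum>i<m. b i - a i) < \<delta> \<epsilon> \<Longrightarrow> (\<Sum>i<m. \<bar>f (b i) - f (a i)\<bar>) < \<epsilon>"
    using abs_cont_onE[OF assms(1)] by blast
  show ?thesis
  proof (rule abs_cont_onI[of \<delta>])
    fix \<epsilon> :: real and m :: nat and a b :: "nat \<Rightarrow> real"
    assume "\<epsilon> > 0" and "\<forall>i<m. a i < b i \<and> {a i..b i} \<subseteq> I"
      and disj: "\<forall>i<m. \<forall>j<m. i \<noteq> j \<longrightarrow> b i \<le> a j \<or> b j \<le> a i"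
      and len: "(\<Sum>i<m. b i - a i) < \<delta> \<epsilon>"
    with assms(2) have "\<forall>i<m. a i < b i \<and> {a i..b i} \<subseteq> J" by blast
    from \<delta>[OF \<open>\<epsilon> > 0\<close> this disj len] show "(\<Sum>i<m. \<bar>f (b i) - f (a i)\<bar>) < \<epsilon>" .
  qed fact
qed

lemma abs_cont_on_imp_uniformly_continuous_on:
  assumes "abs_cont_on f I" "is_interval I"
  shows "uniformly_continuous_on I f"
proof -
  obtain \<delta> where \<delta>_pos: "\<And>\<epsilon>. \<epsilon> > 0 \<Longrightarrow> \<delta> \<epsilon> > 0"
    and \<delta>: "\<And>\<epsilon> (m::nat) (a::nat \<Rightarrow> real) (b::nat \<Rightarrow> real). \<epsilon> > 0 \<Longrightarrow>
      \<forall>i<m. a i < b i \<and> {a i..b i} \<subseteq> I \<Longrightarrow>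
      \<forall>i<m. \<forall>j<m. i \<noteq> j \<longrightarrow> b i \<le> a j \<or> b j \<le> a i \<Longrightarrow>
      (\<Sum>i<m. b i - a i) < \<delta> \<epsilon> \<Longrightarrow> (\<Sum>i<m. \<bar>f (b i) - f (a i)\<bar>) < \<epsilon>"
    using abs_cont_onE[OF assms(1)] by blast
  have close: "\<bar>f y - f x\<bar> < \<epsilon>"
    if "\<epsilon> > 0" "x \<in> I" "y \<in> I" "x \<le> y" "y - x < \<delta> \<epsilon>" for \<epsilon> x y
  proof (cases "x = y")
    case False
    have "{x..y} \<subseteq> I" using mem_is_interval_1_I[OF assms(2) that(2,3)] by auto
    with False that(4,5) have "(\<Sum>i<(1::nat). \<bar>f y - f x\<bar>) < \<epsilon>"
      by (intro \<delta>[OF \<open>\<epsilon> > 0\<close>, of 1 "\<lambda>_. x" "\<lambda>_. y"]) auto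
    then show ?thesis by simp
  qed (use that in simp)
  show ?thesis
    unfolding uniformly_continuous_on_def
  proof (intro allI impI)
    fix \<epsilon> :: real assume "\<epsilon> > 0"
    have "dist (f y) (f x) < \<epsilon>" if "x \<in> I" "y \<in> I" "dist y x < \<delta> \<epsilon>" for x y
    proof (cases "x \<le> y")
      case True
      with that show ?thesis using close[OF \<open>\<epsilon> > 0\<close>, of x y] by (simp add: dist_real_def)
    next
      case False
      with that show ?thesis using close[OF \<open>\<epsilon> > 0\<close>, of y x] by (simp add: dist_real_def abs_minus_commute)
    qed
    with \<delta>_pos[OF \<open>\<epsilon> > 0\<close>] show "\<exists>\<delta>>0. \<forall>x\<in>I. \<forall>x'\<in>I. dist x' x < \<delta> \<longrightarrow> dist (f x') (f x) < \<epsilon>"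
      by blast
  qed
qed

lemma lipschitz_on_imp_abs_cont_on:
  assumes "C-lipschitz_on I f"
  shows "abs_cont_on f I"
proof (rule abs_cont_onI[of "\<lambda>\<epsilon>. \<epsilon> / (C + 1)"])
  have "C \<ge> 0" using assms by (rule lipschitz_on_nonneg)
  then show "\<epsilon> / (C + 1) > 0" if "\<epsilon> > 0" for \<epsilon> :: real
    using that by simp
  fix \<epsilon> :: real and m :: nat and a b :: "nat \<Rightarrow> real"
  assume ab: "\<forall>i<m. a i < b i \<and> {a i..b i} \<subseteq> I" and len: "(\<Sum>i<m. b i - a i) < \<epsilon> / (C + 1)"
  have "(\<Sum>i<m. \<bar>f (b i) - f (a i)\<bar>) \<le> (\<Sum>i<m. C * (b i - a i))"
  proof (rule sum_mono)
    fix i assume "i \<in> {..<m}"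
    with ab have "a i < b i" "{a i..b i} \<subseteq> I" by auto
    then have "a i \<in> I" "b i \<in> I" by auto
    with \<open>a i < b i\<close> show "\<bar>f (b i) - f (a i)\<bar> \<le> C * (b i - a i)"
      using lipschitz_onD[OF assms, of "b i" "a i"] by (simp add: dist_real_def)
  qed
  also have "\<dots> \<le> (C + 1) * (\<Sum>i<m. b i - a i)"
    unfolding sum_distrib_left using ab \<open>C \<ge> 0\<close> by (intro sum_mono mult_right_mono) auto
  also have "\<dots> < \<epsilon>"
    using len \<open>C \<ge> 0\<close> by (simp add: field_simps)
  finally show "(\<Sum>i<m. \<bar>f (b i) - f (a i)\<bar>) < \<epsilon>" .
qed

lemma abs_cont_on_diff:
  assumes "abs_cont_on f I" "abs_cont_on g I"
  shows "abs_cont_on (\<lambda>x. f x - g x) I"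
proof -
  obtain \<delta>f where \<delta>f_pos: "\<And>\<epsilon>. \<epsilon> > 0 \<Longrightarrow> \<delta>f \<epsilon> > 0"
    and \<delta>f: "\<And>\<epsilon> (m::nat) (a::nat \<Rightarrow> real) (b::nat \<Rightarrow> real). \<epsilon> > 0 \<Longrightarrow>
      \<forall>i<m. a i < b i \<and> {a i..b i} \<subseteq> I \<Longrightarrow>
      \<forall>i<m. \<forall>j<m. i \<noteq> j \<longrightarrow> b i \<le> a j \<or> b j \<le> a i \<Longrightarrow>
      (\<Sum>i<m. b i - a i) < \<delta>f \<epsilon> \<Longrightarrow> (\<Sum>i<m. \<bar>f (b i) - f (a i)\<bar>) < \<epsilon>"
    using abs_cont_onE[OF assms(1)] by blast
  obtain \<delta>g where \<delta>g_pos: "\<And>\<epsilon>. \<epsilon> > 0 \<Longrightarrow> \<delta>g \<epsilon> > 0"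
    and \<delta>g: "\<And>\<epsilon> (m::nat) (a::nat \<Rightarrow> real) (b::nat \<Rightarrow> real). \<epsilon> > 0 \<Longrightarrow>
      \<forall>i<m. a i < b i \<and> {a i..b i} \<subseteq> I \<Longrightarrow>
      \<forall>i<m. \<forall>j<m. i \<noteq> j \<longrightarrow> b i \<le> a j \<or> b j \<le> a i \<Longrightarrow>
      (\<Sum>i<m. b i - a i) < \<delta>g \<epsilon> \<Longrightarrow> (\<Sum>i<m. \<bar>g (b i) - g (a i)\<bar>) < \<epsilon>"
    using abs_cont_onE[OF assms(2)] by blast
  show ?thesis
  proof (rule abs_cont_onI[of "\<lambda>\<epsilon>. min (\<delta>f (\<epsilon> / 2)) (\<delta>g (\<epsilon> / 2))"])
    show "min (\<delta>f (\<epsilon> / 2)) (\<delta>g (\<epsilon> / 2)) > 0" if "\<epsilon> > 0" for \<epsilon> :: real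
      using that \<delta>f_pos \<delta>g_pos by simp
    fix \<epsilon> :: real and m :: nat and a b :: "nat \<Rightarrow> real"
    assume "\<epsilon> > 0" and ab: "\<forall>i<m. a i < b i \<and> {a i..b i} \<subseteq> I"
      and disj: "\<forall>i<m. \<forall>j<m. i \<noteq> j \<longrightarrow> b i \<le> a j \<or> b j \<le> a i"
      and len: "(\<Sum>i<m. b i - a i) < min (\<delta>f (\<epsilon> / 2)) (\<delta>g (\<epsilon> / 2))"
    have "(\<Sum>i<m. \<bar>f (b i) - g (b i) - (f (a i) - g (a i))\<bar>)
        \<le> (\<Sum>i<m. \<bar>f (b i) - f (a i)\<bar>) + (\<Sum>i<m. \<bar>g (b i) - g (a i)\<bar>)"
      by (simp add: sum.distrib[symmetric] sum_mono)
    also have "\<dots> < \<epsilon> / 2 + \<epsilon> / 2"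
      using \<delta>f[of "\<epsilon> / 2", OF _ ab disj] \<delta>g[of "\<epsilon> / 2", OF _ ab disj] len \<open>\<epsilon> > 0\<close>
      by (intro add_strict_mono) auto
    finally show "(\<Sum>i<m. \<bar>f (b i) - g (b i) - (f (a i) - g (a i))\<bar>) < \<epsilon>" by simp
  qed
qed

lemma abs_cont_on_finite_family:
  assumes "abs_cont_on f I" "\<epsilon> > 0"
  obtains \<delta> where "\<delta> > 0"
    "\<And>F a b. finite F \<Longrightarrow> (\<And>K. K \<in> F \<Longrightarrow> a K < b K \<and> {a K..b K} \<subseteq> I) \<Longrightarrow>
      (\<And>K L. K \<in> F \<Longrightarrow> L \<in> F \<Longrightarrow> K \<noteq> L \<Longrightarrow> b K \<le> a L \<or> b L \<le> a K) \<Longrightarrow>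
      (\<Sum>K\<in>F. b K - a K) < \<delta> \<Longrightarrow> (\<Sum>K\<in>F. \<bar>f (b K) - f (a K)\<bar>) < \<epsilon>"
proof -
  obtain \<delta> where \<delta>_pos: "\<And>\<epsilon>. \<epsilon> > 0 \<Longrightarrow> \<delta> \<epsilon> > 0"
    and \<delta>: "\<And>\<epsilon> (m::nat) (a::nat \<Rightarrow> real) (b::nat \<Rightarrow> real). \<epsilon> > 0 \<Longrightarrow>
      \<forall>i<m. a i < b i \<and> {a i..b i} \<subseteq> I \<Longrightarrow>
      \<forall>i<m. \<forall>j<m. i \<noteq> j \<longrightarrow> b i \<le> a j \<or> b j \<le> a i \<Longrightarrow>
      (\<Sum>i<m. b i - a i) < \<delta> \<epsilon> \<Longrightarrow> (\<Sum>i<m. \<bar>f (b i) - f (a i)\<bar>) < \<epsilon>"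
    using abs_cont_onE[OF assms(1)] by blast
  have "(\<Sum>K\<in>F. \<bar>f (b K) - f (a K)\<bar>) < \<epsilon>"
    if "finite F" and ab: "\<And>K. K \<in> F \<Longrightarrow> a K < b K \<and> {a K..b K} \<subseteq> I"
      and disj: "\<And>K L. K \<in> F \<Longrightarrow> L \<in> F \<Longrightarrow> K \<noteq> L \<Longrightarrow> b K \<le> a L \<or> b L \<le> a K"
      and small: "(\<Sum>K\<in>F. b K - a K) < \<delta> \<epsilon>" for F and a b :: "'a \<Rightarrow> real"
  proof -
    obtain g where g: "bij_betw g {0..<card F} F"
      using ex_bij_betw_nat_finite[OF \<open>finite F\<close>] by blast
    have reindex: "(\<Sum>i<card F. u (g i)) = (\<Sum>K\<in>F. u K)" for u :: "'a \<Rightarrow> real"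
      using sum.reindex_bij_betw[OF g, of u] by (simp add: atLeast0LessThan)
    have "(\<Sum>i<card F. \<bar>f (b (g i)) - f (a (g i))\<bar>) < \<epsilon>"
    proof (rule \<delta>[OF \<open>\<epsilon> > 0\<close>])
      show "\<forall>i<card F. a (g i) < b (g i) \<and> {a (g i)..b (g i)} \<subseteq> I"
        using ab bij_betwE[OF g] by auto
      show "\<forall>i<card F. \<forall>j<card F. i \<noteq> j \<longrightarrow> b (g i) \<le> a (g j) \<or> b (g j) \<le> a (g i)"
      proof (intro allI impI)
        fix i j assume "i < card F" "j < card F" "i \<noteq> j"
        then have "g i \<in> F" "g j \<in> F" "g i \<noteq> g j"
          using bij_betwE[OF g] inj_on_eq_iff[OF bij_betw_imp_inj_on[OF g]] by auto
        then show "b (g i) \<le> a (g j) \<or> b (g j) \<le> a (g i)" by (rule disj)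
      qed
      show "(\<Sum>i<card F. b (g i) - a (g i)) < \<delta> \<epsilon>"
        using small reindex[of "\<lambda>K. b K - a K"] by simp
    qed
    then show ?thesis using reindex[of "\<lambda>K. \<bar>f (b K) - f (a K)\<bar>"] by simp
  qed
  with \<delta>_pos[OF \<open>\<epsilon> > 0\<close>] show ?thesis by (rule that)
qed

lemma nonoverlapping_if_interiors_disjoint:
  fixes a b a' b' :: real
  assumes "{a..b} \<subseteq> K" "{a'..b'} \<subseteq> K'" "interior K \<inter> interior K' = {}" "a < b" "a' < b'"
  shows "b \<le> a' \<or> b' \<le> a"
proof (rule ccontr)
  assume "\<not> (b \<le> a' \<or> b' \<le> a)"
  with assms(4,5) have "(max a a' + min b b') / 2 \<in> interior {a..b} \<inter> interior {a'..b'}" by auto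
  with interior_mono[OF assms(1)] interior_mono[OF assms(2)] assms(3) show False by blast
qed

lemma abs_cont_on_division_sum:
  assumes "abs_cont_on f I" "\<epsilon> > 0"
  obtains \<delta> where "\<delta> > 0"
    "\<And>\<D> S p q. \<D> division_of S \<Longrightarrow> S \<subseteq> I \<Longrightarrow> measure lebesgue S < \<delta> \<Longrightarrow>
      (\<And>K. K \<in> \<D> \<Longrightarrow> p K \<in> K \<and> q K \<in> K) \<Longrightarrow> (\<Sum>K\<in>\<D>. \<bar>f (q K) - f (p K)\<bar>) < \<epsilon>"
proof -
  obtain \<delta> where "\<delta> > 0" and \<delta>: "\<And>(F :: real set set) a b. finite F \<Longrightarrow> (\<And>K. K \<in> F \<Longrightarrow> a K < b K \<and> {a K..b K} \<subseteq> I) \<Longrightarrow>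
      (\<And>K L. K \<in> F \<Longrightarrow> L \<in> F \<Longrightarrow> K \<noteq> L \<Longrightarrow> b K \<le> a L \<or> b L \<le> a K) \<Longrightarrow>
      (\<Sum>K\<in>F. b K - a K) < \<delta> \<Longrightarrow> (\<Sum>K\<in>F. \<bar>f (b K) - f (a K)\<bar>) < \<epsilon>"
    by (rule abs_cont_on_finite_family[OF assms]) blast
  have "(\<Sum>K\<in>\<D>. \<bar>f (q K) - f (p K)\<bar>) < \<epsilon>"
    if div: "\<D> division_of S" and "S \<subseteq> I" and small: "measure lebesgue S < \<delta>"
      and pq: "\<And>K. K \<in> \<D> \<Longrightarrow> p K \<in> K \<and> q K \<in> K" for \<D> S p q
  proof -
    define a where "a K = min (p K) (q K)" for K
    define b where "b K = max (p K) (q K)" for K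
    define \<D>' where "\<D>' = {K \<in> \<D>. p K \<noteq> q K}"
    have "finite \<D>'" "\<D>' \<subseteq> \<D>" using division_ofD(1)[OF div] by (auto simp: \<D>'_def)
    have ab_sub: "{a K..b K} \<subseteq> K" and ab_le: "b K - a K \<le> measure lebesgue K" if K: "K \<in> \<D>" for K
    proof -
      obtain u v where "K = {u..v}" using division_ofD(4)[OF div K] by (metis cbox_interval)
      with pq[OF K] show "{a K..b K} \<subseteq> K" "b K - a K \<le> measure lebesgue K"
        by (auto simp: a_def b_def)
    qed
    have ab_lt: "a K < b K" if "K \<in> \<D>'" for K
      using that by (cases "p K \<le> q K") (auto simp: \<D>'_def a_def b_def)
    have "(\<Sum>K\<in>\<D>'. \<bar>f (b K) - f (a K)\<bar>) < \<epsilon>"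
    proof (rule \<delta>[OF \<open>finite \<D>'\<close>])
      show "a K < b K \<and> {a K..b K} \<subseteq> I" if "K \<in> \<D>'" for K
        using ab_lt[OF that] ab_sub division_ofD(2)[OF div] \<open>S \<subseteq> I\<close> that \<open>\<D>' \<subseteq> \<D>\<close> by blast
      show "b K \<le> a L \<or> b L \<le> a K" if "K \<in> \<D>'" "L \<in> \<D>'" "K \<noteq> L" for K L
      proof (rule nonoverlapping_if_interiors_disjoint)
        show "{a K..b K} \<subseteq> K" "{a L..b L} \<subseteq> L"
          using ab_sub that \<open>\<D>' \<subseteq> \<D>\<close> by auto
        show "interior K \<inter> interior L = {}"
          using division_ofD(5)[OF div] that \<open>\<D>' \<subseteq> \<D>\<close> by auto
      qed (use ab_lt that in auto)
      have "(\<Sum>K\<in>\<D>'. b K - a K) \<le> (\<Sum>K\<in>\<D>'. measure lebesgue K)"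
        using ab_le \<open>\<D>' \<subseteq> \<D>\<close> by (intro sum_mono) auto
      also have "\<dots> \<le> (\<Sum>K\<in>\<D>. measure lebesgue K)"
        using division_ofD(1)[OF div] \<open>\<D>' \<subseteq> \<D>\<close> by (intro sum_mono2) auto
      also have "\<dots> = measure lebesgue S"
        by (rule content_division[OF div])
      finally show "(\<Sum>K\<in>\<D>'. b K - a K) < \<delta>" using small by linarith
    qed
    also have "(\<Sum>K\<in>\<D>'. \<bar>f (b K) - f (a K)\<bar>) = (\<Sum>K\<in>\<D>'. \<bar>f (q K) - f (p K)\<bar>)"
      by (intro sum.cong refl) (auto simp: a_def b_def min_def max_def abs_minus_commute)
    also have "\<dots> = (\<Sum>K\<in>\<D>. \<bar>f (q K) - f (p K)\<bar>)"
      using division_ofD(1)[OF div] by (intro sum.mono_neutral_left) (auto simp: \<D>'_def)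
    finally show ?thesis .
  qed
  with \<open>\<delta> > 0\<close> show ?thesis by (rule that)
qed

lemma measure_continuous_image_le_oscillation:
  fixes f :: "real \<Rightarrow> real"
  assumes "continuous_on K f" "compact K" "K \<noteq> {}"
  obtains p q where "p \<in> K" "q \<in> K" "measure lebesgue (f ` K) \<le> \<bar>f q - f p\<bar>"
proof -
  obtain p where "p \<in> K" and p: "\<forall>y\<in>K. f p \<le> f y"
    using continuous_attains_inf[OF assms(2,3,1)] by blast
  obtain q where "q \<in> K" and q: "\<forall>y\<in>K. f y \<le> f q"
    using continuous_attains_sup[OF assms(2,3,1)] by blast
  have "f ` K \<in> lmeasurable"
    by (rule lmeasurable_compact[OF compact_continuous_image[OF assms(1,2)]])
  then have "measure lebesgue (f ` K) \<le> measure lebesgue {f p..f q}"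
    using p q by (intro measure_mono_fmeasurable fmeasurableD) auto
  also have "\<dots> \<le> \<bar>f q - f p\<bar>" by simp
  finally show ?thesis using that \<open>p \<in> K\<close> \<open>q \<in> K\<close> by blast
qed

lemma abs_cont_on_division_image_measure:
  assumes "abs_cont_on f I" "is_interval I" "\<epsilon> > 0"
  obtains \<delta> where "\<delta> > 0"
    "\<And>\<D> S. \<D> division_of S \<Longrightarrow> S \<subseteq> I \<Longrightarrow> measure lebesgue S < \<delta> \<Longrightarrow>
      (\<Sum>K\<in>\<D>. measure lebesgue (f ` K)) < \<epsilon>"
proof -
  obtain \<delta> where "\<delta> > 0" and \<delta>: "\<And>\<D> S p q. \<D> division_of S \<Longrightarrow> S \<subseteq> I \<Longrightarrow>
      measure lebesgue S < \<delta> \<Longrightarrow> (\<And>K. K \<in> \<D> \<Longrightarrow> p K \<in> K \<and> q K \<in> K) \<Longrightarrow>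
      (\<Sum>K\<in>\<D>. \<bar>f (q K) - f (p K)\<bar>) < \<epsilon>"
    by (rule abs_cont_on_division_sum[OF assms(1,3)]) blast
  have cont: "continuous_on I f"
    using assms(1,2) by (intro uniformly_continuous_imp_continuous abs_cont_on_imp_uniformly_continuous_on)
  have "(\<Sum>K\<in>\<D>. measure lebesgue (f ` K)) < \<epsilon>"
    if div: "\<D> division_of S" and "S \<subseteq> I" "measure lebesgue S < \<delta>" for \<D> S
  proof -
    have "\<exists>p q. p \<in> K \<and> q \<in> K \<and> measure lebesgue (f ` K) \<le> \<bar>f q - f p\<bar>" if K: "K \<in> \<D>" for K
    proof -
      have "K \<subseteq> I" using division_ofD(2)[OF div K] \<open>S \<subseteq> I\<close> by blast
      then have "continuous_on K f" by (rule continuous_on_subset[OF cont])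
      moreover have "compact K" "K \<noteq> {}"
        using division_ofD(3,4)[OF div K] by auto
      ultimately obtain p q where "p \<in> K" "q \<in> K" "measure lebesgue (f ` K) \<le> \<bar>f q - f p\<bar>"
        by (rule measure_continuous_image_le_oscillation)
      then show ?thesis by blast
    qed
    then obtain p q where pq: "\<And>K. K \<in> \<D> \<Longrightarrow> p K \<in> K \<and> q K \<in> K"
      and osc: "\<And>K. K \<in> \<D> \<Longrightarrow> measure lebesgue (f ` K) \<le> \<bar>f (q K) - f (p K)\<bar>"
      by metis
    have "(\<Sum>K\<in>\<D>. measure lebesgue (f ` K)) \<le> (\<Sum>K\<in>\<D>. \<bar>f (q K) - f (p K)\<bar>)"
      using osc by (rule sum_mono)
    also have "\<dots> < \<epsilon>" using \<delta>[OF that pq] by blast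
    finally show ?thesis .
  qed
  with \<open>\<delta> > 0\<close> show ?thesis by (rule that)
qed

lemma abs_cont_on_negligible_image:
  assumes "abs_cont_on f {c..d}" "E \<subseteq> {c..d}" "negligible E"
  shows "negligible (f ` E)"
  unfolding negligible_outer_le
proof (intro allI impI)
  fix \<epsilon> :: real assume "\<epsilon> > 0"
  obtain \<delta> where "\<delta> > 0" and \<delta>: "\<And>\<D> S. \<D> division_of S \<Longrightarrow> S \<subseteq> {c..d} \<Longrightarrow>
      measure lebesgue S < \<delta> \<Longrightarrow> (\<Sum>K\<in>\<D>. measure lebesgue (f ` K)) < \<epsilon>"
    by (rule abs_cont_on_division_image_measure[OF assms(1) is_interval_cc \<open>\<epsilon> > 0\<close>]) blast
  have "E \<in> lmeasurable" "E \<subseteq> cbox c d" "\<delta> / 2 > 0"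
    using assms(2,3) \<open>\<delta> > 0\<close> by (auto intro: negligible_imp_measurable)
  then obtain \<D> where "countable \<D>"
      and \<D>: "\<And>K. K \<in> \<D> \<Longrightarrow> K \<subseteq> cbox c d \<and> K \<noteq> {} \<and> (\<exists>u v. K = cbox u v)"
      and disj: "pairwise (\<lambda>A B. interior A \<inter> interior B = {}) \<D>"
      and "E \<subseteq> \<Union>\<D>" "\<Union>\<D> \<in> lmeasurable"
      and small: "measure lebesgue (\<Union>\<D>) \<le> measure lebesgue E + \<delta> / 2"
    by (rule measurable_outer_intervals_bounded) blast
  have "continuous_on {c..d} f"
    using abs_cont_on_imp_uniformly_continuous_on[OF assms(1) is_interval_cc]
    by (rule uniformly_continuous_imp_continuous)
  then have image_meas: "f ` K \<in> lmeasurable" if "K \<in> \<D>" for K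
  proof (intro lmeasurable_compact compact_continuous_image)
    show "continuous_on K f" "compact K"
      using \<D>[OF that] continuous_on_subset[OF \<open>continuous_on {c..d} f\<close>, of K] by auto
  qed
  have bound: "measure lebesgue (\<Union>K\<in>\<D>'. f ` K) \<le> \<epsilon>" if "\<D>' \<subseteq> \<D>" "finite \<D>'" for \<D>'
  proof -
    have div: "\<D>' division_of \<Union>\<D>'"
    proof (rule division_ofI)
      show "K \<noteq> {}" "\<exists>a b. K = cbox a b" if "K \<in> \<D>'" for K
        using \<D> that \<open>\<D>' \<subseteq> \<D>\<close> by auto
      show "interior K \<inter> interior L = {}" if "K \<in> \<D>'" "L \<in> \<D>'" "K \<noteq> L" for K L
        using pairwiseD[OF pairwise_subset[OF disj \<open>\<D>' \<subseteq> \<D>\<close>]] that by blast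
    qed (use that in auto)
    have "measure lebesgue (\<Union>\<D>') \<le> measure lebesgue (\<Union>\<D>)"
      using div \<open>\<D>' \<subseteq> \<D>\<close> \<open>\<Union>\<D> \<in> lmeasurable\<close>
      by (intro measure_mono_fmeasurable) (auto dest: lmeasurable_division)
    also have "\<dots> < \<delta>"
      using small \<open>\<delta> > 0\<close> assms(3) by (simp add: negligible_imp_measure0)
    moreover have "\<Union>\<D>' \<subseteq> {c..d}" using \<D> \<open>\<D>' \<subseteq> \<D>\<close> by auto
    ultimately have "(\<Sum>K\<in>\<D>'. measure lebesgue (f ` K)) < \<epsilon>"
      using \<delta>[OF div] by simp
    moreover have "measure lebesgue (\<Union>K\<in>\<D>'. f ` K) \<le> (\<Sum>K\<in>\<D>'. measure lebesgue (f ` K))"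
      using image_meas that by (intro measure_UNION_le) auto
    ultimately show ?thesis by linarith
  qed
  have "(\<Union>K\<in>\<D>. f ` K) \<in> lmeasurable"
    by (rule fmeasurable_UN_bound[OF \<open>countable \<D>\<close> image_meas bound])
  moreover have "measure lebesgue (\<Union>K\<in>\<D>. f ` K) \<le> \<epsilon>"
    by (rule measure_UN_bound[OF \<open>countable \<D>\<close> image_meas bound])
  moreover have "f ` E \<subseteq> (\<Union>K\<in>\<D>. f ` K)" using \<open>E \<subseteq> \<Union>\<D>\<close> by blast
  ultimately show "\<exists>T. f ` E \<subseteq> T \<and> T \<in> lmeasurable \<and> measure lebesgue T \<le> \<epsilon>" by blast
qed

section \<open>Real functions of one variable\<close>

lemma continuous_on_last_crossing:
  fixes G :: "real \<Rightarrow> real"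
  assumes "continuous_on {c..d} G" "c \<le> d" "G c \<le> y" "y < G d"
  obtains u where "c \<le> u" "u < d" "G u = y" "\<And>x. u < x \<Longrightarrow> x \<le> d \<Longrightarrow> y < G x"
proof -
  define S where "S = {c..d} \<inter> G -` {..y}"
  have "closed S" unfolding S_def
    by (rule continuous_closed_preimage[OF assms(1)]) auto
  have "c \<in> S" "bdd_above S" using assms(2,3) by (auto simp: S_def bdd_above_def)
  define u where "u = Sup S"
  have "u \<in> S" unfolding u_def using closed_contains_Sup[OF _ \<open>bdd_above S\<close> \<open>closed S\<close>] \<open>c \<in> S\<close> by blast
  then have "c \<le> u" "u \<le> d" "G u \<le> y" by (auto simp: S_def)
  with assms(4) have "u < d" by (cases "u = d") auto
  have right: "y < G x" if "u < x" "x \<le> d" for x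
  proof (rule ccontr)
    assume "\<not> y < G x"
    with that \<open>c \<le> u\<close> have "x \<in> S" by (auto simp: S_def)
    then have "x \<le> u" unfolding u_def using \<open>bdd_above S\<close> by (rule cSup_upper)
    with that show False by simp
  qed
  have "y \<le> G u"
  proof (rule ccontr)
    assume "\<not> y \<le> G u"
    then obtain r where "r > 0" and r: "\<And>x. x \<in> {c..d} \<Longrightarrow> dist x u < r \<Longrightarrow> dist (G x) (G u) < y - G u"
      using assms(1) \<open>c \<le> u\<close> \<open>u \<le> d\<close> unfolding continuous_on_iff by (metis atLeastAtMost_iff diff_gt_0_iff_gt not_le)
    define x where "x = min (u + r / 2) d"
    have "u < x" "x \<le> d" "dist x u < r" using \<open>r > 0\<close> \<open>u < d\<close> by (auto simp: x_def dist_real_def)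
    with r[of x] \<open>c \<le> u\<close> have "G x < y" by (auto simp: dist_real_def)
    with right[OF \<open>u < x\<close> \<open>x \<le> d\<close>] show False by simp
  qed
  with \<open>G u \<le> y\<close> have "G u = y" by simp
  show ?thesis by (rule that[OF \<open>c \<le> u\<close> \<open>u < d\<close> \<open>G u = y\<close> right])
qed

lemma deriv_neg_where_pos_imp_le_max:
  fixes G :: "real \<Rightarrow> real"
  assumes "c \<le> d" "continuous_on {c..d} G" "negligible (G ` E)"
    and deriv: "\<And>x. x \<in> {c..<d} \<Longrightarrow> x \<notin> E \<Longrightarrow> G x > 0 \<Longrightarrow> \<exists>D<0. (G has_real_derivative D) (at x)"
  shows "G d \<le> max (G c) 0"
proof (rule ccontr)
  assume "\<not> G d \<le> max (G c) 0"
  then have "\<not> negligible {max (G c) 0<..<G d}"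
    using negligible_interval(2)[of "max (G c) 0" "G d"] by simp
  moreover have "{max (G c) 0<..<G d} \<subseteq> G ` E"
  proof
    fix y assume y: "y \<in> {max (G c) 0<..<G d}"
    then obtain u where "c \<le> u" "u < d" "G u = y" and right: "\<And>x. u < x \<Longrightarrow> x \<le> d \<Longrightarrow> y < G x"
      using continuous_on_last_crossing[OF assms(2,1), of y] by auto
    show "y \<in> G ` E"
    proof (rule ccontr)
      assume "y \<notin> G ` E"
      with \<open>G u = y\<close> have "u \<notin> E" by auto
      moreover have "G u > 0" using y \<open>G u = y\<close> by simp
      ultimately obtain D where "D < 0" "(G has_real_derivative D) (at u)"
        using deriv \<open>c \<le> u\<close> \<open>u < d\<close> by auto
      then obtain r where "r > 0" and r: "\<And>h. h > 0 \<Longrightarrow> h < r \<Longrightarrow> G (u + h) < G u"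
        using DERIV_neg_dec_right by blast
      define h where "h = min (r / 2) (d - u)"
      have "h > 0" "h < r" "u + h \<le> d" using \<open>r > 0\<close> \<open>u < d\<close> by (auto simp: h_def)
      with r right[of "u + h"] \<open>G u = y\<close> show False by force
    qed
  qed
  ultimately show False using assms(3) negligible_subset by blast
qed

lemma le_at_left_endpoint:
  fixes W z :: "real \<Rightarrow> real"
  assumes "a < b" "\<And>y. a < y \<Longrightarrow> y < b \<Longrightarrow> W y \<le> z y"
    and "(W \<longlongrightarrow> L) (at_left b)" "W b \<le> L" "(z \<longlongrightarrow> z b) (at_left b)"
  shows "W b \<le> z b"
proof -
  have "eventually (\<lambda>y. W y \<le> z y) (at_left b)"
    using eventually_at_left_real[OF assms(1)] by eventually_elim (use assms(2) in auto)
  with assms(3,5) have "L \<le> z b" by (intro tendsto_le[of "at_left b" z _ W L]) auto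
  with assms(4) show ?thesis by simp
qed

section \<open>Comparison with an exponential envelope\<close>

lemma delta_tau:
  assumes "\<delta>1 < \<delta>0" "0 < \<delta>1" "0 < h"
  shows "0 < delta_tau \<delta>0 \<delta>1 h" and "delta_tau \<delta>0 \<delta>1 h = \<delta>0 - \<delta>1 * exp (2 * delta_tau \<delta>0 \<delta>1 h * h)"
proof -
  define g where "g x = x - \<delta>0 + \<delta>1 * exp (2 * x * h)" for x
  have g_strict_mono: "g x < g y" if "x < y" for x y
  proof -
    have "exp (2 * x * h) < exp (2 * y * h)" using that assms(3) by simp
    then have "\<delta>1 * exp (2 * x * h) < \<delta>1 * exp (2 * y * h)" using assms(2) by simp
    with that show ?thesis by (simp add: g_def)
  qed
  have "continuous_on {0..\<delta>0} g" unfolding g_def by (intro continuous_intros)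
  moreover have "g 0 \<le> 0" "0 \<le> g \<delta>0" "0 \<le> \<delta>0" using assms(1,2) by (simp_all add: g_def)
  ultimately obtain x where "0 \<le> x" "g x = 0"
    using IVT'[of g 0 0 \<delta>0] by auto
  moreover have "x \<noteq> 0" using \<open>g x = 0\<close> assms(1) by (auto simp: g_def)
  ultimately have "0 < x \<and> x = \<delta>0 - \<delta>1 * exp (2 * x * h)" by (auto simp: g_def)
  moreover have "y = x" if "0 < y \<and> y = \<delta>0 - \<delta>1 * exp (2 * y * h)" for y
    using g_strict_mono[of x y] g_strict_mono[of y x] that \<open>g x = 0\<close>
    by (cases x y rule: linorder_cases) (auto simp: g_def)
  ultimately have "delta_tau \<delta>0 \<delta>1 h = x"
    unfolding delta_tau_def by (rule the_equality)
  with \<open>0 < x \<and> x = \<delta>0 - \<delta>1 * exp (2 * x * h)\<close>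
  show "0 < delta_tau \<delta>0 \<delta>1 h" "delta_tau \<delta>0 \<delta>1 h = \<delta>0 - \<delta>1 * exp (2 * delta_tau \<delta>0 \<delta>1 h * h)"
    by simp_all
qed

locale halanay_rate =
  fixes \<delta>0 \<delta>1 h \<kappa> :: real
  assumes \<delta>1_pos: "0 < \<delta>1" and \<delta>1_less: "\<delta>1 < \<delta>0" and \<kappa>_pos: "0 < \<kappa>"
    and \<kappa>_eq: "\<kappa> = 2 * \<delta>0 - 2 * \<delta>1 * exp (\<kappa> * h)"
begin

definition envelope :: "real \<Rightarrow> real \<Rightarrow> real \<Rightarrow> real \<Rightarrow> real" where
  "envelope c M \<epsilon> y = (M + \<epsilon>) * exp (- \<kappa> * (y - c)) + \<epsilon>"

lemma envelope_le:
  assumes "0 \<le> M + \<epsilon>" "c \<le> y"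
  shows "envelope c M \<epsilon> y \<le> M + 2 * \<epsilon>"
proof -
  have "exp (- \<kappa> * (y - c)) \<le> 1" using assms(2) \<kappa>_pos by simp
  then have "(M + \<epsilon>) * exp (- \<kappa> * (y - c)) \<le> (M + \<epsilon>) * 1"
    using assms(1) by (rule mult_left_mono)
  then show ?thesis by (simp add: envelope_def)
qed

lemma has_real_derivative_envelope:
  "(envelope c M \<epsilon> has_real_derivative - \<kappa> * ((M + \<epsilon>) * exp (- \<kappa> * (y - c)))) (at y)"
  unfolding envelope_def by (auto intro!: derivative_eq_intros)

lemma lipschitz_on_envelope:
  assumes "0 \<le> M + \<epsilon>"
  shows "(\<kappa> * (M + \<epsilon>))-lipschitz_on {c..} (envelope c M \<epsilon>)"
proof -
  have bound: "\<bar>envelope c M \<epsilon> x - envelope c M \<epsilon> y\<bar> \<le> \<kappa> * (M + \<epsilon>) * (y - x)"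
    if "c \<le> x" "x \<le> y" for x y
  proof -
    define e1 e2 where "e1 = exp (- \<kappa> * (x - c))" and "e2 = exp (- \<kappa> * (y - x))"
    have "e1 \<le> 1" "e2 \<le> 1" using that \<kappa>_pos by (simp_all add: e1_def e2_def)
    have "1 - e2 \<le> \<kappa> * (y - x)"
      using exp_ge_add_one_self[of "- \<kappa> * (y - x)"] by (simp add: e2_def)
    have diff: "exp (- \<kappa> * (x - c)) - exp (- \<kappa> * (y - c)) = e1 * (1 - e2)"
      by (simp add: e1_def e2_def exp_add[symmetric] algebra_simps)
    have "0 \<le> exp (- \<kappa> * (x - c)) - exp (- \<kappa> * (y - c))"
      unfolding diff using \<open>e2 \<le> 1\<close> by (simp add: e1_def)
    moreover have "exp (- \<kappa> * (x - c)) - exp (- \<kappa> * (y - c)) \<le> \<kappa> * (y - x)"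
    proof -
      have "e1 * (1 - e2) \<le> 1 * (1 - e2)"
        using \<open>e1 \<le> 1\<close> \<open>e2 \<le> 1\<close> by (intro mult_right_mono) auto
      with diff \<open>1 - e2 \<le> \<kappa> * (y - x)\<close> show ?thesis by simp
    qed
    ultimately have "0 \<le> (M + \<epsilon>) * (exp (- \<kappa> * (x - c)) - exp (- \<kappa> * (y - c)))"
      "(M + \<epsilon>) * (exp (- \<kappa> * (x - c)) - exp (- \<kappa> * (y - c))) \<le> (M + \<epsilon>) * (\<kappa> * (y - x))"
      using assms by (simp_all add: mult_left_mono)
    moreover have "envelope c M \<epsilon> x - envelope c M \<epsilon> y
        = (M + \<epsilon>) * (exp (- \<kappa> * (x - c)) - exp (- \<kappa> * (y - c)))"
      by (simp add: envelope_def algebra_simps)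
    ultimately show ?thesis by (simp add: algebra_simps)
  qed
  show ?thesis
  proof (rule lipschitz_onI)
    fix x y assume "x \<in> {c..}" "y \<in> {c..}"
    then show "dist (envelope c M \<epsilon> x) (envelope c M \<epsilon> y) \<le> \<kappa> * (M + \<epsilon>) * dist x y"
      using bound[of x y] bound[of y x]
      by (cases "x \<le> y") (simp_all add: dist_real_def abs_minus_commute)
  qed (use assms \<kappa>_pos in simp)
qed

definition halanay_ineq_on :: "(real \<Rightarrow> real) \<Rightarrow> real \<Rightarrow> real set \<Rightarrow> bool" where
  "halanay_ineq_on W c I \<longleftrightarrow> (AE x in lebesgue. x \<in> I \<longrightarrow>
     (\<exists>D. (W has_real_derivative D) (at x) \<and> D \<le> - 2 * \<delta>0 * W x + 2 * \<delta>1 * (SUP \<theta>\<in>{c..x}. W \<theta>)))"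

text \<open>The margin \<open>(\<delta>0 - \<delta>1) \<epsilon> / \<delta>1\<close> allowed for the supremum term is exactly what the
  additive \<open>\<epsilon>\<close> of the envelope absorbs.\<close>

lemma envelope_rate:
  assumes "0 \<le> A" "0 \<le> t" "t \<le> h" "A * exp (- \<kappa> * t) + \<epsilon> < w"
    and "S \<le> A + \<epsilon> + (\<delta>0 - \<delta>1) * \<epsilon> / \<delta>1" and "D \<le> - 2 * \<delta>0 * w + 2 * \<delta>1 * S"
  shows "D < - \<kappa> * (A * exp (- \<kappa> * t))"
proof -
  define Y where "Y = A * exp (- \<kappa> * t)"
  have "exp (\<kappa> * h) * Y = A * exp (\<kappa> * (h - t))"
    by (simp add: Y_def exp_add[symmetric] algebra_simps)
  also have "\<dots> \<ge> A * 1" using assms(1,3) \<kappa>_pos by (intro mult_left_mono) auto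
  finally have "\<delta>1 * A \<le> \<delta>1 * (exp (\<kappa> * h) * Y)" using \<delta>1_pos by simp
  moreover have "\<delta>1 * S \<le> \<delta>1 * (A + \<epsilon>) + (\<delta>0 - \<delta>1) * \<epsilon>"
  proof -
    have "\<delta>1 * S \<le> \<delta>1 * (A + \<epsilon> + (\<delta>0 - \<delta>1) * \<epsilon> / \<delta>1)"
      using assms(5) \<delta>1_pos by (intro mult_left_mono) auto
    also have "\<dots> = \<delta>1 * (A + \<epsilon>) + (\<delta>0 - \<delta>1) * \<epsilon>"
      using \<delta>1_pos by (simp add: distrib_left)
    finally show ?thesis .
  qed
  moreover have "\<delta>0 * (Y + \<epsilon>) < \<delta>0 * w"
    using assms(4) \<delta>1_pos \<delta>1_less by (simp add: Y_def)
  moreover have "\<kappa> * Y = 2 * \<delta>0 * Y - 2 * \<delta>1 * (exp (\<kappa> * h) * Y)"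
    by (subst \<kappa>_eq) (simp add: algebra_simps)
  ultimately show ?thesis
    using assms(6) unfolding Y_def[symmetric] by (simp add: algebra_simps)
qed

lemma abs_cont_on_envelope_gap:
  assumes "0 \<le> M + \<epsilon>" "c \<le> p" "abs_cont_on W {p..q}"
  shows "abs_cont_on (\<lambda>y. W y - envelope c M \<epsilon> y) {p..q}"
proof (rule abs_cont_on_diff[OF assms(3)])
  have "(\<kappa> * (M + \<epsilon>))-lipschitz_on {p..q} (envelope c M \<epsilon>)"
    using lipschitz_on_envelope[OF assms(1), of c] assms(2) by (auto intro: lipschitz_on_subset)
  then show "abs_cont_on (envelope c M \<epsilon>) {p..q}" by (rule lipschitz_on_imp_abs_cont_on)
qed

lemma sup_le_envelope_margin:
  assumes "0 \<le> M" "0 < \<epsilon>" "c \<le> p" "p \<le> x"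
    and below: "\<And>y. c \<le> y \<Longrightarrow> y \<le> p \<Longrightarrow> W y \<le> envelope c M \<epsilon> y"
    and near: "\<And>\<theta>. p < \<theta> \<Longrightarrow> \<theta> \<le> x \<Longrightarrow> \<bar>W \<theta> - W p\<bar> < (\<delta>0 - \<delta>1) * \<epsilon> / \<delta>1"
  shows "(SUP \<theta>\<in>{c..x}. W \<theta>) \<le> (M + \<epsilon>) + \<epsilon> + (\<delta>0 - \<delta>1) * \<epsilon> / \<delta>1"
proof (rule cSUP_least)
  show "{c..x} \<noteq> {}" using assms(3,4) by simp
  fix \<theta> assume \<theta>: "\<theta> \<in> {c..x}"
  have below_bound: "W y \<le> M + 2 * \<epsilon>" if "c \<le> y" "y \<le> p" for y
    using below[OF that] envelope_le[OF _ that(1), of M \<epsilon>] assms(1,2) by simp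
  have "0 < (\<delta>0 - \<delta>1) * \<epsilon> / \<delta>1"
    using \<delta>1_pos \<delta>1_less assms(2) by simp
  show "W \<theta> \<le> (M + \<epsilon>) + \<epsilon> + (\<delta>0 - \<delta>1) * \<epsilon> / \<delta>1"
  proof (cases "\<theta> \<le> p")
    case True
    with below_bound[of \<theta>] \<theta> \<open>0 < (\<delta>0 - \<delta>1) * \<epsilon> / \<delta>1\<close> show ?thesis by simp
  next
    case False
    with near[of \<theta>] below_bound[of p] \<theta> assms(3) show ?thesis by auto
  qed
qed

lemma envelope_step:
  assumes "0 \<le> M" "0 < \<epsilon>" "c \<le> a" "b - c \<le> h"
    and ac: "abs_cont_on W {a..<b}" and ineq: "halanay_ineq_on W c {a..<b}"
    and osc: "\<And>x y. x \<in> {a..<b} \<Longrightarrow> y \<in> {a..<b} \<Longrightarrow> \<bar>x - y\<bar> < \<rho> \<Longrightarrow>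
      \<bar>W x - W y\<bar> < (\<delta>0 - \<delta>1) * \<epsilon> / \<delta>1"
    and "a \<le> p" "p \<le> q" "q < b" "q - p < \<rho>"
    and below: "\<And>y. c \<le> y \<Longrightarrow> y \<le> p \<Longrightarrow> W y \<le> envelope c M \<epsilon> y"
  shows "W q \<le> envelope c M \<epsilon> q"
proof -
  define G where "G y = W y - envelope c M \<epsilon> y" for y
  have "abs_cont_on G {p..q}"
    unfolding G_def using \<open>0 \<le> M\<close> \<open>0 < \<epsilon>\<close> \<open>c \<le> a\<close> \<open>a \<le> p\<close> \<open>q < b\<close>
    by (intro abs_cont_on_envelope_gap abs_cont_on_subset[OF ac]) auto
  then have cont: "continuous_on {p..q} G"
    by (intro uniformly_continuous_imp_continuous abs_cont_on_imp_uniformly_continuous_on) auto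
  obtain N where "N \<in> null_sets lebesgue"
    and der: "\<And>x. x \<notin> N \<Longrightarrow> x \<in> {a..<b} \<Longrightarrow>
      \<exists>D. (W has_real_derivative D) (at x) \<and> D \<le> - 2 * \<delta>0 * W x + 2 * \<delta>1 * (SUP \<theta>\<in>{c..x}. W \<theta>)"
    using ineq unfolding halanay_ineq_on_def by (auto elim!: AE_E3)
  then have "negligible N" by (simp add: negligible_iff_null_sets)
  then have "negligible (N \<inter> {p..q})" by (rule negligible_subset) auto
  with \<open>abs_cont_on G {p..q}\<close> have negligible_image: "negligible (G ` (N \<inter> {p..q}))"
    by (intro abs_cont_on_negligible_image) auto
  have sup_bound: "(SUP \<theta>\<in>{c..x}. W \<theta>) \<le> (M + \<epsilon>) + \<epsilon> + (\<delta>0 - \<delta>1) * \<epsilon> / \<delta>1"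
    if "p \<le> x" "x \<le> q" for x
  proof (rule sup_le_envelope_margin[OF \<open>0 \<le> M\<close> \<open>0 < \<epsilon>\<close> _ that(1) below])
    show "\<bar>W \<theta> - W p\<bar> < (\<delta>0 - \<delta>1) * \<epsilon> / \<delta>1" if "p < \<theta>" "\<theta> \<le> x" for \<theta>
      using osc[of \<theta> p] that \<open>x \<le> q\<close> \<open>q < b\<close> \<open>a \<le> p\<close> \<open>q - p < \<rho>\<close> by auto
  qed (use \<open>c \<le> a\<close> \<open>a \<le> p\<close> in auto)
  have deriv_neg: "\<exists>D<0. (G has_real_derivative D) (at x)"
    if x: "x \<in> {p..<q}" "x \<notin> N \<inter> {p..q}" "G x > 0" for x
  proof -
    obtain D where D: "(W has_real_derivative D) (at x)"
      and D_le: "D \<le> - 2 * \<delta>0 * W x + 2 * \<delta>1 * (SUP \<theta>\<in>{c..x}. W \<theta>)"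
      using der[of x] x \<open>a \<le> p\<close> \<open>q < b\<close> by auto
    have "D < - \<kappa> * ((M + \<epsilon>) * exp (- \<kappa> * (x - c)))"
    proof (rule envelope_rate[OF _ _ _ _ sup_bound D_le])
      show "0 \<le> M + \<epsilon>" "0 \<le> x - c" "x - c \<le> h"
        using x \<open>0 \<le> M\<close> \<open>0 < \<epsilon>\<close> \<open>c \<le> a\<close> \<open>a \<le> p\<close> \<open>q < b\<close> \<open>b - c \<le> h\<close> by auto
      show "(M + \<epsilon>) * exp (- \<kappa> * (x - c)) + \<epsilon> < W x"
        using \<open>G x > 0\<close> by (simp add: G_def envelope_def)
    qed (use x in auto)
    moreover have "(G has_real_derivative D - - \<kappa> * ((M + \<epsilon>) * exp (- \<kappa> * (x - c)))) (at x)"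
      unfolding G_def by (intro DERIV_diff D has_real_derivative_envelope)
    ultimately show ?thesis by (intro exI[of _ "D - - \<kappa> * ((M + \<epsilon>) * exp (- \<kappa> * (x - c)))"]) auto
  qed
  have "G q \<le> max (G p) 0"
    using \<open>p \<le> q\<close> cont negligible_image deriv_neg by (rule deriv_neg_where_pos_imp_le_max)
  moreover have "G p \<le> 0" using below[of p] \<open>c \<le> a\<close> \<open>a \<le> p\<close> by (simp add: G_def)
  ultimately show ?thesis by (simp add: G_def)
qed

lemma envelope_subinterval:
  assumes "0 \<le> M" "0 < \<epsilon>" "c \<le> a" "a < b" "b - c \<le> h"
    and ac: "abs_cont_on W {a..<b}" and ineq: "halanay_ineq_on W c {a..<b}"
    and left: "\<exists>L. (W \<longlongrightarrow> L) (at_left b) \<and> W b \<le> L"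
    and below: "\<And>y. c \<le> y \<Longrightarrow> y \<le> a \<Longrightarrow> W y \<le> envelope c M \<epsilon> y"
    and "c \<le> y" "y \<le> b"
  shows "W y \<le> envelope c M \<epsilon> y"
proof -
  have "uniformly_continuous_on {a..<b} W"
    using ac by (rule abs_cont_on_imp_uniformly_continuous_on) (simp add: is_interval_convex_1)
  moreover have "0 < (\<delta>0 - \<delta>1) * \<epsilon> / \<delta>1" using \<delta>1_pos \<delta>1_less \<open>0 < \<epsilon>\<close> by simp
  ultimately obtain \<rho> where "\<rho> > 0"
    and osc: "\<And>x y. x \<in> {a..<b} \<Longrightarrow> y \<in> {a..<b} \<Longrightarrow> \<bar>x - y\<bar> < \<rho> \<Longrightarrow>
      \<bar>W x - W y\<bar> < (\<delta>0 - \<delta>1) * \<epsilon> / \<delta>1"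
    unfolding uniformly_continuous_on_def dist_real_def by metis
  have steps: "W y \<le> envelope c M \<epsilon> y" if "c \<le> y" "y < b" "y \<le> a + real n * (\<rho> / 2)" for n y
    using that
  proof (induction n arbitrary: y)
    case 0
    then show ?case using below by simp
  next
    case (Suc n)
    show ?case
    proof (cases "y \<le> a + real n * (\<rho> / 2)")
      case True
      with Suc.IH Suc.prems show ?thesis by blast
    next
      case False
      show ?thesis
      proof (rule envelope_step[OF \<open>0 \<le> M\<close> \<open>0 < \<epsilon>\<close> \<open>c \<le> a\<close> \<open>b - c \<le> h\<close> ac ineq osc])
        show "a \<le> a + real n * (\<rho> / 2)" using \<open>\<rho> > 0\<close> by simp
        show "a + real n * (\<rho> / 2) \<le> y" "y < b" using False Suc.prems by auto
        show "y - (a + real n * (\<rho> / 2)) < \<rho>"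
          using Suc.prems(3) \<open>\<rho> > 0\<close> unfolding of_nat_Suc distrib_right by linarith
        show "W z \<le> envelope c M \<epsilon> z" if "c \<le> z" "z \<le> a + real n * (\<rho> / 2)" for z
          using Suc.IH[of z] that False Suc.prems(2) by simp
      qed auto
    qed
  qed
  have before_b: "W y \<le> envelope c M \<epsilon> y" if "c \<le> y" "y < b" for y
  proof -
    obtain n where "y - a < real n * (\<rho> / 2)"
      using ex_less_of_nat_mult[of "\<rho> / 2" "y - a"] \<open>\<rho> > 0\<close> by auto
    with that show ?thesis by (intro steps[of y n]) auto
  qed
  obtain L where L: "(W \<longlongrightarrow> L) (at_left b)" "W b \<le> L" using left by blast
  have envelope_lim: "(envelope c M \<epsilon> \<longlongrightarrow> envelope c M \<epsilon> b) (at_left b)"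
    unfolding envelope_def by (intro tendsto_intros)
  have "W b \<le> envelope c M \<epsilon> b"
  proof (rule le_at_left_endpoint[OF \<open>a < b\<close> _ L envelope_lim])
    fix y assume "a < y" "y < b"
    with before_b \<open>c \<le> a\<close> show "W y \<le> envelope c M \<epsilon> y" by simp
  qed
  with before_b \<open>c \<le> y\<close> \<open>y \<le> b\<close> show ?thesis
    by (cases "y = b") auto
qed

lemma exp_decay_on_segment:
  assumes t_first: "t 0 = c" and t_last: "t N = c'" and t_mono: "\<And>j. j < N \<Longrightarrow> t j < t (Suc j)"
    and "c' - c \<le> h" "0 \<le> W c"
    and ac: "\<And>j. j < N \<Longrightarrow> abs_cont_on W {t j..<t (Suc j)}"
    and ineq: "\<And>j. j < N \<Longrightarrow> halanay_ineq_on W c {t j..<t (Suc j)}"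
    and left: "\<And>j. 1 \<le> j \<Longrightarrow> j \<le> N \<Longrightarrow> \<exists>L. (W \<longlongrightarrow> L) (at_left (t j)) \<and> W (t j) \<le> L"
    and "c \<le> x" "x \<le> c'"
  shows "W x \<le> W c * exp (- \<kappa> * (x - c))"
proof -
  have t_le: "t i \<le> t j" if "i \<le> j" "j \<le> N" for i j
    using lift_Suc_mono_le_ivl[of "{..<N}" t i j] t_mono that by fastforce
  have below_envelope: "W y \<le> envelope c (W c) \<epsilon> y" if "0 < \<epsilon>" "c \<le> y" "y \<le> t j" "j \<le> N" for \<epsilon> y j
    using that(2-)
  proof (induction j arbitrary: y)
    case 0
    with t_first \<open>0 < \<epsilon>\<close> show ?case by (simp add: envelope_def)
  next
    case (Suc j)
    show ?case
    proof (rule envelope_subinterval[OF \<open>0 \<le> W c\<close> \<open>0 < \<epsilon>\<close>])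
      show "c \<le> t j" "t (Suc j) - c \<le> h"
        using t_le[of 0 j] t_le[of "Suc j" N] Suc.prems t_first t_last \<open>c' - c \<le> h\<close> by auto
      show "t j < t (Suc j)" "abs_cont_on W {t j..<t (Suc j)}" "halanay_ineq_on W c {t j..<t (Suc j)}"
        using t_mono ac ineq Suc.prems by auto
      show "\<exists>L. (W \<longlongrightarrow> L) (at_left (t (Suc j))) \<and> W (t (Suc j)) \<le> L"
        using left Suc.prems by simp
      show "W z \<le> envelope c (W c) \<epsilon> z" if "c \<le> z" "z \<le> t j" for z
        using Suc.IH that Suc.prems by simp
    qed (use Suc.prems in auto)
  qed
  have "((\<lambda>\<epsilon>. envelope c (W c) \<epsilon> x) \<longlongrightarrow> envelope c (W c) 0 x) (at_right 0)"
    unfolding envelope_def by (intro tendsto_intros)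
  moreover have "eventually (\<lambda>\<epsilon>. W x \<le> envelope c (W c) \<epsilon> x) (at_right 0)"
    using eventually_at_right_less[of "0::real"]
    by eventually_elim (use below_envelope[of _ x N] \<open>c \<le> x\<close> \<open>x \<le> c'\<close> t_last in auto)
  ultimately have "W x \<le> envelope c (W c) 0 x"
    by (rule tendsto_lowerbound) simp
  then show ?thesis by (simp add: envelope_def)
qed

end

section \<open>Chaining the segments\<close>

lemma exp_decay_chain:
  fixes s :: "nat \<Rightarrow> real" and W :: "real \<Rightarrow> real"
  assumes "mono s" "filterlim s at_top sequentially"
    and segment: "\<And>k y. s k \<le> y \<Longrightarrow> y \<le> s (Suc k) \<Longrightarrow> W y \<le> W (s k) * exp (- \<kappa> * (y - s k))"
    and "s 0 \<le> x"
  shows "W x \<le> exp (- \<kappa> * (x - s 0)) * W (s 0)"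
proof -
  have step: "W y \<le> exp (- \<kappa> * (y - s 0)) * W (s 0)"
    if "W (s k) \<le> exp (- \<kappa> * (s k - s 0)) * W (s 0)" "s k \<le> y" "y \<le> s (Suc k)" for k y
  proof -
    have "W y \<le> W (s k) * exp (- \<kappa> * (y - s k))" using segment that(2,3) .
    also have "\<dots> \<le> exp (- \<kappa> * (s k - s 0)) * W (s 0) * exp (- \<kappa> * (y - s k))"
      using that(1) by (rule mult_right_mono) simp
    also have "\<dots> = exp (- \<kappa> * (y - s 0)) * W (s 0)"
      by (simp add: mult_exp_exp algebra_simps)
    finally show ?thesis .
  qed
  have nodes: "W (s k) \<le> exp (- \<kappa> * (s k - s 0)) * W (s 0)" for k
  proof (induction k)
    case (Suc k)
    then show ?case using step[of k "s (Suc k)"] monoD[OF \<open>mono s\<close>, of k "Suc k"] by simp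
  qed simp
  have "\<exists>k. x < s k"
    using \<open>filterlim s at_top sequentially\<close> by (auto simp: filterlim_at_top_dense eventually_sequentially)
  define K where "K = (LEAST k. x < s k)"
  have "x < s K" unfolding K_def using \<open>\<exists>k. x < s k\<close> by (rule LeastI_ex)
  with \<open>s 0 \<le> x\<close> obtain k where "K = Suc k" by (cases K) auto
  then have "s k \<le> x" using not_less_Least[of k "\<lambda>k. x < s k"] unfolding K_def by simp
  with \<open>x < s K\<close> \<open>K = Suc k\<close> show ?thesis using step[OF nodes] by simp
qed

theorem lemma2:
  fixes s :: "nat \<Rightarrow> real" and h \<delta>0 \<delta>1 :: real
    and n :: "nat \<Rightarrow> nat" and t :: "nat \<Rightarrow> nat \<Rightarrow> real"
    and W :: "real \<Rightarrow> real"
  assumes s_mono: "strict_mono s"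
    and s_lim: "filterlim s at_top sequentially"
    and h_pos: "h > 0"
    and s_step: "\<And>k. s (Suc k) - s k \<le> h"
    and t_first: "\<And>k. t k 0 = s k"
    and t_last: "\<And>k. t k (n k) = s (Suc k)"
    and t_mono: "\<And>k j. j < n k \<Longrightarrow> t k j < t k (Suc j)"
    and W_nonneg: "\<And>x. x \<ge> s 0 \<Longrightarrow> W x \<ge> 0"
    and W_ac: "\<And>k j. j < n k \<Longrightarrow> abs_cont_on W {t k j..<t k (Suc j)}"
    and W_left: "\<And>k j. 1 \<le> j \<Longrightarrow> j \<le> n k \<Longrightarrow>
                   \<exists>L. (W \<longlongrightarrow> L) (at_left (t k j)) \<and> L \<ge> W (t k j)"
    and \<delta>_order: "\<delta>0 > \<delta>1" "\<delta>1 > 0"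
    and W_deriv: "\<And>k j. j < n k \<Longrightarrow>
       AE x in lebesgue. x \<in> {t k j..<t k (Suc j)} \<longrightarrow>
         (\<exists>D. (W has_real_derivative D) (at x) \<and>
              D \<le> - 2 * \<delta>0 * W x + 2 * \<delta>1 * (SUP \<theta>\<in>{s k..x}. W \<theta>))"
  shows "\<And>x. x \<ge> s 0 \<Longrightarrow>
           W x \<le> exp (- 2 * delta_tau \<delta>0 \<delta>1 h * (x - s 0)) * W (s 0)"
proof -
  fix x assume "s 0 \<le> x"
  define \<kappa> where "\<kappa> = 2 * delta_tau \<delta>0 \<delta>1 h"
  interpret halanay_rate \<delta>0 \<delta>1 h \<kappa>
  proof
    show "0 < \<kappa>" "\<kappa> = 2 * \<delta>0 - 2 * \<delta>1 * exp (\<kappa> * h)"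
      using delta_tau[OF \<delta>_order h_pos] unfolding \<kappa>_def by (simp, simp add: algebra_simps)
  qed (use \<delta>_order in auto)
  have "mono s" using s_mono by (rule strict_mono_mono)
  have "W y \<le> W (s k) * exp (- \<kappa> * (y - s k))" if "s k \<le> y" "y \<le> s (Suc k)" for k y
  proof (rule exp_decay_on_segment[where t="t k" and c="s k" and N="n k" and c'="s (Suc k)"])
    show "0 \<le> W (s k)" using W_nonneg monoD[OF \<open>mono s\<close>, of 0 k] by simp
    show "halanay_ineq_on W (s k) {t k j..<t k (Suc j)}" if "j < n k" for j
      using W_deriv[OF that] unfolding halanay_ineq_on_def .
  qed (use t_first t_last t_mono s_step W_ac W_left that in auto)
  with \<open>mono s\<close> s_lim have "W x \<le> exp (- \<kappa> * (x - s 0)) * W (s 0)"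
    using \<open>s 0 \<le> x\<close> by (rule exp_decay_chain)
  then show "W x \<le> exp (- 2 * delta_tau \<delta>0 \<delta>1 h * (x - s 0)) * W (s 0)"
    by (simp add: \<kappa>_def)
qed

end
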